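(* Let $(G,M,\Delta)$ be a Garside structure and $(H,N,\delta)$ a parabolic substructure. Put $\omega=\delta^{-1}\Delta$, $\Phi(\alpha)=\Delta\alpha\Delta^{-1}$ for $\alpha\in G$ and $\varphi(\beta)=\delta\beta\delta^{-1}$ for $\beta\in H$. Let $b\in N$. Then $b\wedge_L\omega=1$ and $b\vee_L\omega=b\omega=\omega b'$, where $b'=(\Phi^{-1}\circ\varphi)(b)$.
   Context: Let $G$ be a group and $M$ a submonoid with $M\cap M^{-1}=\{1\}$. Define $\alpha\le_L\beta$ iff $\alpha^{-1}\beta\in M$, and $\alpha\le_R\beta$ iff $\beta\alpha^{-1}\in M$. For $a\in M$ let $\mathrm{Div}_L(a)=\{b\in M: b\le_L a\}$, $\mathrm{Div}_R(a)=\{b\in M: b\le_R a\}$; $a$ is balanced if these coincide, and then $\mathrm{Div}(a)$ denotes this set. $M$ is Noetherian if each $a\in M$ admits an $n$ such that $a$ is not a product of more than $n$ non-trivial factors. A Garside structure $(G,M,\Delta)$: $\Delta\in M$ balanced, $M$ Noetherian, $\mathrm{Div}(\Delta)$ finite and generating $M$ as a monoid and $G$ as a group, $(G,\le_L)$ a lattice with meet $\wedge_L$ and join $\vee_L$. A parabolic substructure $(H,N,\delta)$: $\delta\in M$ balanced, $H$ (resp. $N$) the subgroup (resp. submonoid) generated by $\mathrm{Div}(\delta)$, and $\mathrm{Div}(\delta)=\mathrm{Div}(\Delta)\cap N$; it is assumed $H\neq\{1\}$. *)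

theory Defs
  imports "HOL-Algebra.Algebra"
begin

definition leL :: "('a, 'b) monoid_scheme \<Rightarrow> 'a set \<Rightarrow> 'a \<Rightarrow> 'a \<Rightarrow> bool" where
  "leL G M a b \<longleftrightarrow> inv\<^bsub>G\<^esub> a \<otimes>\<^bsub>G\<^esub> b \<in> M"

definition leR :: "('a, 'b) monoid_scheme \<Rightarrow> 'a set \<Rightarrow> 'a \<Rightarrow> 'a \<Rightarrow> bool" where
  "leR G M a b \<longleftrightarrow> b \<otimes>\<^bsub>G\<^esub> inv\<^bsub>G\<^esub> a \<in> M"

definition DivL :: "('a, 'b) monoid_scheme \<Rightarrow> 'a set \<Rightarrow> 'a \<Rightarrow> 'a set" where
  "DivL G M a = {b \<in> M. leL G M b a}"

definition DivR :: "('a, 'b) monoid_scheme \<Rightarrow> 'a set \<Rightarrow> 'a \<Rightarrow> 'a set" where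
  "DivR G M a = {b \<in> M. leR G M b a}"

definition balanced :: "('a, 'b) monoid_scheme \<Rightarrow> 'a set \<Rightarrow> 'a \<Rightarrow> bool" where
  "balanced G M a \<longleftrightarrow> a \<in> M \<and> DivL G M a = DivR G M a"

text \<open>For balanced a, Div(a) is the common value of DivL and DivR.\<close>
definition Div :: "('a, 'b) monoid_scheme \<Rightarrow> 'a set \<Rightarrow> 'a \<Rightarrow> 'a set" where
  "Div G M a = DivL G M a"

definition lprod :: "('a, 'b) monoid_scheme \<Rightarrow> 'a list \<Rightarrow> 'a" where
  "lprod G xs = foldr (\<lambda>x y. x \<otimes>\<^bsub>G\<^esub> y) xs \<one>\<^bsub>G\<^esub>"

definition monoid_gen :: "('a, 'b) monoid_scheme \<Rightarrow> 'a set \<Rightarrow> 'a set" where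
  "monoid_gen G S = {lprod G xs | xs. set xs \<subseteq> S}"

definition noetherian :: "('a, 'b) monoid_scheme \<Rightarrow> 'a set \<Rightarrow> bool" where
  "noetherian G M \<longleftrightarrow> (\<forall>a\<in>M. \<exists>n::nat. \<forall>xs. set xs \<subseteq> M - {\<one>\<^bsub>G\<^esub>} \<and> lprod G xs = a \<longrightarrow> length xs \<le> n)"

definition is_meetL :: "('a, 'b) monoid_scheme \<Rightarrow> 'a set \<Rightarrow> 'a \<Rightarrow> 'a \<Rightarrow> 'a \<Rightarrow> bool" where
  "is_meetL G M a b c \<longleftrightarrow> c \<in> carrier G \<and> leL G M c a \<and> leL G M c b \<and>
     (\<forall>d\<in>carrier G. leL G M d a \<and> leL G M d b \<longrightarrow> leL G M d c)"

definition is_joinL :: "('a, 'b) monoid_scheme \<Rightarrow> 'a set \<Rightarrow> 'a \<Rightarrow> 'a \<Rightarrow> 'a \<Rightarrow> bool" where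
  "is_joinL G M a b c \<longleftrightarrow> c \<in> carrier G \<and> leL G M a c \<and> leL G M b c \<and>
     (\<forall>d\<in>carrier G. leL G M a d \<and> leL G M b d \<longrightarrow> leL G M c d)"

definition meetL :: "('a, 'b) monoid_scheme \<Rightarrow> 'a set \<Rightarrow> 'a \<Rightarrow> 'a \<Rightarrow> 'a" where
  "meetL G M a b = (THE c. is_meetL G M a b c)"

definition joinL :: "('a, 'b) monoid_scheme \<Rightarrow> 'a set \<Rightarrow> 'a \<Rightarrow> 'a \<Rightarrow> 'a" where
  "joinL G M a b = (THE c. is_joinL G M a b c)"

definition lattice_L :: "('a, 'b) monoid_scheme \<Rightarrow> 'a set \<Rightarrow> bool" where
  "lattice_L G M \<longleftrightarrow> (\<forall>a\<in>carrier G. \<forall>b\<in>carrier G.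
     (\<exists>c. is_meetL G M a b c) \<and> (\<exists>c. is_joinL G M a b c))"

definition pos_submonoid :: "('a, 'b) monoid_scheme \<Rightarrow> 'a set \<Rightarrow> bool" where
  "pos_submonoid G M \<longleftrightarrow> M \<subseteq> carrier G \<and> \<one>\<^bsub>G\<^esub> \<in> M \<and>
     (\<forall>x\<in>M. \<forall>y\<in>M. x \<otimes>\<^bsub>G\<^esub> y \<in> M) \<and> M \<inter> (\<lambda>x. inv\<^bsub>G\<^esub> x) ` M = {\<one>\<^bsub>G\<^esub>}"

definition garside_structure :: "('a, 'b) monoid_scheme \<Rightarrow> 'a set \<Rightarrow> 'a \<Rightarrow> bool" where
  "garside_structure G M \<Delta> \<longleftrightarrow> group G \<and> pos_submonoid G M \<and>
     balanced G M \<Delta> \<and> noetherian G M \<and> finite (Div G M \<Delta>) \<and>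
     monoid_gen G (Div G M \<Delta>) = M \<and> generate G (Div G M \<Delta>) = carrier G \<and>
     lattice_L G M"

definition parabolic_substructure ::
  "('a, 'b) monoid_scheme \<Rightarrow> 'a set \<Rightarrow> 'a \<Rightarrow> 'a set \<Rightarrow> 'a set \<Rightarrow> 'a \<Rightarrow> bool" where
  "parabolic_substructure G M \<Delta> H N \<delta> \<longleftrightarrow> balanced G M \<delta> \<and>
     H = generate G (Div G M \<delta>) \<and> N = monoid_gen G (Div G M \<delta>) \<and>
     Div G M \<delta> = Div G M \<Delta> \<inter> N \<and> H \<noteq> {\<one>\<^bsub>G\<^esub>}"

end

theory Submission imports Defs begin

(* Conjugation by a balanced element a preserves the submonoid generated by Div(a); hence
   \<Phi>^{-1} preserves M, \<phi> preserves N, and b \<omega> = \<omega> b' with b' in M.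
   A simple s dividing an element b of N lies in N: peel off the first factor t of b and pass
   to the simple t^{-1}(s \<squnion> t).  So the first simple factor x of b \<sqinter> \<omega> lies in Div(\<delta>),
   while \<delta> x divides \<delta> \<omega> = \<Delta> and lies in N, hence divides \<delta>; thus x = 1.
   For the join, \<delta> \<squnion> p^{-1}\<Delta> = \<Delta> for every p in Div(\<delta>), which means that
   \<omega> \<le> t y implies \<omega> \<le> y for t in Div(\<delta>); peeling off the factors of b shows
   that every common upper bound b y of b and \<omega> satisfies \<omega> \<le> y, i.e. b \<omega> \<le> b y. *)

lemma lprod_Nil [simp]: "lprod G [] = \<one>\<^bsub>G\<^esub>"
  by (simp add: lprod_def)

lemma lprod_Cons [simp]: "lprod G (x # xs) = x \<otimes>\<^bsub>G\<^esub> lprod G xs"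
  by (simp add: lprod_def)

lemma (in group) inv_mult_cancel_left [simp]:
  "x \<in> carrier G \<Longrightarrow> y \<in> carrier G \<Longrightarrow> inv x \<otimes> (x \<otimes> y) = y"
  by (metis inv_closed l_inv l_one m_assoc)

lemma (in group) mult_inv_cancel_left [simp]:
  "x \<in> carrier G \<Longrightarrow> y \<in> carrier G \<Longrightarrow> x \<otimes> (inv x \<otimes> y) = y"
  by (metis inv_closed r_inv l_one m_assoc)

lemma (in group) lprod_closed: "set xs \<subseteq> carrier G \<Longrightarrow> lprod G xs \<in> carrier G"
  by (induction xs) auto

lemma (in group) lprod_append:
  "set xs \<subseteq> carrier G \<Longrightarrow> set ys \<subseteq> carrier G \<Longrightarrow> lprod G (xs @ ys) = lprod G xs \<otimes> lprod G ys"
  by (induction xs) (auto simp: m_assoc lprod_closed)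

lemma (in group) lprod_conj:
  assumes "g \<in> carrier G" "set xs \<subseteq> carrier G"
  shows "g \<otimes> lprod G xs \<otimes> inv g = lprod G (map (\<lambda>x. g \<otimes> x \<otimes> inv g) xs)"
  using assms(2)
proof (induction xs)
  case Nil
  with assms(1) show ?case by simp
next
  case (Cons x xs)
  have "g \<otimes> lprod G (x # xs) \<otimes> inv g = (g \<otimes> x \<otimes> inv g) \<otimes> (g \<otimes> lprod G xs \<otimes> inv g)"
    using assms(1) Cons.prems by (simp add: m_assoc lprod_closed)
  with Cons show ?case by simp
qed

lemma (in group) monoid_gen_mult:
  assumes "S \<subseteq> carrier G" "x \<in> monoid_gen G S" "y \<in> monoid_gen G S"
  shows "x \<otimes> y \<in> monoid_gen G S"
proof -
  obtain xs ys where "x = lprod G xs" "set xs \<subseteq> S" "y = lprod G ys" "set ys \<subseteq> S"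
    using assms(2,3) unfolding monoid_gen_def by auto
  with assms(1) show ?thesis
    unfolding monoid_gen_def by (auto intro!: exI[of _ "xs @ ys"] simp: lprod_append)
qed

lemma (in group) monoid_gen_conj_closed:
  assumes "g \<in> carrier G" "S \<subseteq> carrier G" "\<And>s. s \<in> S \<Longrightarrow> g \<otimes> s \<otimes> inv g \<in> S"
    and "x \<in> monoid_gen G S"
  shows "g \<otimes> x \<otimes> inv g \<in> monoid_gen G S"
proof -
  obtain xs where "x = lprod G xs" "set xs \<subseteq> S"
    using assms(4) unfolding monoid_gen_def by auto
  with assms(1-3) show ?thesis
    unfolding monoid_gen_def
    by (auto intro!: exI[of _ "map (\<lambda>x. g \<otimes> x \<otimes> inv g) xs"] assms(3) simp: lprod_conj)
qed

locale positive_monoid = group G for G (structure) +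
  fixes M :: "'a set"
  assumes pos_submonoid: "pos_submonoid G M"
begin

abbreviation le_left :: "'a \<Rightarrow> 'a \<Rightarrow> bool" (infix "\<preceq>" 50)
  where "x \<preceq> y \<equiv> leL G M x y"

lemma M_closed [simp]: "x \<in> M \<Longrightarrow> x \<in> carrier G"
  using pos_submonoid by (auto simp: pos_submonoid_def)

lemma one_in_M [simp]: "\<one> \<in> M"
  using pos_submonoid by (simp add: pos_submonoid_def)

lemma mult_in_M [intro]: "x \<in> M \<Longrightarrow> y \<in> M \<Longrightarrow> x \<otimes> y \<in> M"
  using pos_submonoid by (simp add: pos_submonoid_def)

lemma M_inv_eq_one:
  assumes "x \<in> M" "inv x \<in> M" shows "x = \<one>"
proof -
  have "x \<in> (\<lambda>x. inv x) ` M"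
    using assms by (metis M_closed image_eqI inv_inv)
  with assms(1) pos_submonoid show ?thesis
    unfolding pos_submonoid_def by blast
qed

lemma lprod_in_M: "set xs \<subseteq> M \<Longrightarrow> lprod G xs \<in> M"
  by (induction xs) auto

lemma monoid_gen_subset: "S \<subseteq> M \<Longrightarrow> monoid_gen G S \<subseteq> M"
  unfolding monoid_gen_def by (auto intro: lprod_in_M)

lemma lprod_Div_in_M: "set xs \<subseteq> Div G M a \<Longrightarrow> lprod G xs \<in> M"
  by (rule lprod_in_M) (auto simp: Div_def DivL_def)

lemma leL_refl: "x \<in> carrier G \<Longrightarrow> x \<preceq> x"
  by (simp add: leL_def)

lemma leL_trans:
  assumes "x \<in> carrier G" "y \<in> carrier G" "z \<in> carrier G" "x \<preceq> y" "y \<preceq> z"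
  shows "x \<preceq> z"
proof -
  have "inv x \<otimes> z = (inv x \<otimes> y) \<otimes> (inv y \<otimes> z)"
    using assms by (simp add: m_assoc leL_def)
  with assms show ?thesis by (auto simp: leL_def)
qed

lemma leL_antisym:
  assumes "x \<in> carrier G" "y \<in> carrier G" "x \<preceq> y" "y \<preceq> x" shows "x = y"
proof -
  have "inv (inv x \<otimes> y) = inv y \<otimes> x"
    using assms by (simp add: inv_mult_group)
  with assms have "inv x \<otimes> y = \<one>"
    by (intro M_inv_eq_one) (auto simp: leL_def)
  with assms show ?thesis
    by (metis inv_closed inv_equality inv_inv)
qed

lemma one_leL_iff: "x \<in> carrier G \<Longrightarrow> \<one> \<preceq> x \<longleftrightarrow> x \<in> M"
  by (simp add: leL_def)

lemma leL_mult_right: "x \<in> carrier G \<Longrightarrow> y \<in> M \<Longrightarrow> x \<preceq> x \<otimes> y"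
  by (simp add: leL_def)

lemma leL_mult_left_iff:
  "g \<in> carrier G \<Longrightarrow> x \<in> carrier G \<Longrightarrow> y \<in> carrier G \<Longrightarrow> g \<otimes> x \<preceq> g \<otimes> y \<longleftrightarrow> x \<preceq> y"
  by (simp add: leL_def m_assoc inv_mult_group)

lemma meetL_eq: "is_meetL G M x y m \<Longrightarrow> meetL G M x y = m"
  unfolding meetL_def by (rule the_equality) (auto simp: is_meetL_def intro: leL_antisym)

lemma joinL_eq: "is_joinL G M x y j \<Longrightarrow> joinL G M x y = j"
  unfolding joinL_def by (rule the_equality) (auto simp: is_joinL_def intro: leL_antisym)

lemma Div_iff: "x \<in> Div G M a \<longleftrightarrow> x \<in> M \<and> x \<preceq> a"
  by (simp add: Div_def DivL_def)

lemma Div_subset_M: "Div G M a \<subseteq> M"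
  by (auto simp: Div_iff)

lemma Div_iff_right: "balanced G M a \<Longrightarrow> x \<in> Div G M a \<longleftrightarrow> x \<in> M \<and> a \<otimes> inv x \<in> M"
  by (simp add: Div_def balanced_def DivR_def leR_def)

lemma balanced_in_Div: "balanced G M a \<Longrightarrow> a \<in> Div G M a"
  by (simp add: Div_iff balanced_def leL_refl)

lemma balanced_left_complement:
  assumes "balanced G M a" "x \<in> Div G M a"
  shows "inv x \<otimes> a \<in> Div G M a"
proof -
  have "a \<in> M" "x \<in> M" "inv x \<otimes> a \<in> M"
    using assms by (auto simp: balanced_def Div_iff leL_def)
  then show ?thesis
    using Div_iff_right[OF assms(1)] by (simp add: inv_mult_group m_assoc)
qed

lemma balanced_right_complement:
  assumes "balanced G M a" "x \<in> Div G M a"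
  shows "a \<otimes> inv x \<in> Div G M a"
proof -
  have "a \<in> M" "x \<in> M" "a \<otimes> inv x \<in> M"
    using assms by (auto simp: balanced_def Div_iff_right)
  then show ?thesis
    by (simp add: Div_iff leL_def inv_mult_group m_assoc)
qed

lemma balanced_conj_Div:
  assumes "balanced G M a" "x \<in> Div G M a"
  shows "a \<otimes> x \<otimes> inv a \<in> Div G M a" "inv a \<otimes> x \<otimes> a \<in> Div G M a"
proof -
  have "a \<in> carrier G" "x \<in> carrier G"
    using assms by (auto simp: balanced_def Div_iff)
  moreover have "a \<otimes> inv (a \<otimes> inv x) \<in> Div G M a" "inv (inv x \<otimes> a) \<otimes> a \<in> Div G M a"
    using assms by (simp_all add: balanced_left_complement balanced_right_complement)
  ultimately show "a \<otimes> x \<otimes> inv a \<in> Div G M a" "inv a \<otimes> x \<otimes> a \<in> Div G M a"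
    by (simp_all add: inv_mult_group m_assoc)
qed

lemma balanced_conj_monoid_gen:
  assumes "balanced G M a" "x \<in> monoid_gen G (Div G M a)"
  shows "a \<otimes> x \<otimes> inv a \<in> monoid_gen G (Div G M a)" "inv a \<otimes> x \<otimes> a \<in> monoid_gen G (Div G M a)"
proof -
  have a: "a \<in> carrier G" and "Div G M a \<subseteq> carrier G"
    using assms(1) by (auto simp: balanced_def Div_iff)
  then show "a \<otimes> x \<otimes> inv a \<in> monoid_gen G (Div G M a)"
    using assms by (auto intro!: monoid_gen_conj_closed balanced_conj_Div)
  have "inv a \<otimes> x \<otimes> inv (inv a) \<in> monoid_gen G (Div G M a)"
    using a \<open>Div G M a \<subseteq> carrier G\<close> assms
    by (intro monoid_gen_conj_closed) (auto simp: balanced_conj_Div)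
  with a show "inv a \<otimes> x \<otimes> a \<in> monoid_gen G (Div G M a)"
    by simp
qed

end

locale garside = positive_monoid +
  fixes \<Delta> :: 'a
  assumes balanced_Delta: "balanced G M \<Delta>"
    and Div_Delta_generates: "monoid_gen G (Div G M \<Delta>) = M"
    and lattice: "lattice_L G M"
begin

lemma Delta_in_M: "\<Delta> \<in> M"
  using balanced_Delta by (simp add: balanced_def)

lemma Delta_closed [simp]: "\<Delta> \<in> carrier G"
  using Delta_in_M by simp

lemma conj_Delta_in_M:
  assumes "x \<in> M" shows "\<Delta> \<otimes> x \<otimes> inv \<Delta> \<in> M" "inv \<Delta> \<otimes> x \<otimes> \<Delta> \<in> M"
  using balanced_conj_monoid_gen[OF balanced_Delta] assms by (simp_all add: Div_Delta_generates)

lemma joinL_exists: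
  assumes "x \<in> carrier G" "y \<in> carrier G"
  obtains j where "j \<in> carrier G" "x \<preceq> j" "y \<preceq> j" "\<And>z. z \<in> carrier G \<Longrightarrow> x \<preceq> z \<Longrightarrow> y \<preceq> z \<Longrightarrow> j \<preceq> z"
  using lattice assms unfolding lattice_L_def is_joinL_def by blast

lemma meetL_exists:
  assumes "x \<in> carrier G" "y \<in> carrier G"
  obtains m where "is_meetL G M x y m"
  using lattice assms unfolding lattice_L_def by blast

end

locale parabolic = garside +
  fixes \<delta> :: 'a and N :: "'a set"
  assumes balanced_delta: "balanced G M \<delta>"
    and N_generated: "N = monoid_gen G (Div G M \<delta>)"
    and Div_delta: "Div G M \<delta> = Div G M \<Delta> \<inter> N"
begin

abbreviation \<omega> :: 'a where "\<omega> \<equiv> inv \<delta> \<otimes> \<Delta>"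

lemma delta_in_M: "\<delta> \<in> M"
  using balanced_delta by (simp add: balanced_def)

lemma delta_closed [simp]: "\<delta> \<in> carrier G"
  using delta_in_M by simp

lemma Div_delta_subset_N: "x \<in> Div G M \<delta> \<Longrightarrow> x \<in> N"
  using Div_delta by blast

lemma N_subset_M: "x \<in> N \<Longrightarrow> x \<in> M"
  using monoid_gen_subset[OF Div_subset_M] N_generated by blast

lemma N_mult: "x \<in> N \<Longrightarrow> y \<in> N \<Longrightarrow> x \<otimes> y \<in> N"
  unfolding N_generated by (rule monoid_gen_mult) (auto simp: Div_iff)

lemma one_in_N: "\<one> \<in> N"
  unfolding N_generated monoid_gen_def by (auto intro!: exI[of _ "[]"])

lemma delta_in_N: "\<delta> \<in> N"
  using balanced_in_Div[OF balanced_delta] by (rule Div_delta_subset_N)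

lemma delta_leL_Delta: "\<delta> \<preceq> \<Delta>"
  using balanced_in_Div[OF balanced_delta] Div_delta by (simp add: Div_iff)

lemma omega_in_M: "\<omega> \<in> M"
  using delta_leL_Delta by (simp add: leL_def)

lemma conj_delta_in_N: "b \<in> N \<Longrightarrow> \<delta> \<otimes> b \<otimes> inv \<delta> \<in> N"
  using balanced_conj_monoid_gen(1)[OF balanced_delta] by (simp add: N_generated)

lemma omega_commute:
  "b \<in> carrier G \<Longrightarrow> b \<otimes> \<omega> = \<omega> \<otimes> (inv \<Delta> \<otimes> (\<delta> \<otimes> b \<otimes> inv \<delta>) \<otimes> \<Delta>)"
  by (simp add: m_assoc)

lemma Div_Delta_leL_lprod_in_N:
  assumes "set ts \<subseteq> Div G M \<delta>" "s \<in> Div G M \<Delta>" "s \<preceq> lprod G ts"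
  shows "s \<in> N"
  using assms
proof (induction ts arbitrary: s)
  case Nil
  then have "s \<in> M" "inv s \<in> M"
    by (simp_all add: Div_iff leL_def)
  then show ?case
    using M_inv_eq_one one_in_N by blast
next
  case (Cons t ts)
  have t: "t \<in> Div G M \<delta>" "t \<in> Div G M \<Delta>" "t \<in> M"
    using Cons.prems(1) Div_delta by (auto simp: Div_iff)
  have ts: "lprod G ts \<in> M"
    using Cons.prems(1) by (auto intro: lprod_Div_in_M)
  have s: "s \<in> M" "s \<preceq> \<Delta>"
    using Cons.prems(2) by (simp_all add: Div_iff)
  obtain j where j: "j \<in> carrier G" "s \<preceq> j" "t \<preceq> j"
    and j_least: "\<And>z. z \<in> carrier G \<Longrightarrow> s \<preceq> z \<Longrightarrow> t \<preceq> z \<Longrightarrow> j \<preceq> z"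
    using joinL_exists[of s t] s t by auto
  have j_Delta: "j \<preceq> \<Delta>"
    using j_least s t by (simp add: Div_iff)
  have j_lprod: "j \<preceq> t \<otimes> lprod G ts"
    using j_least Cons.prems(3) t ts by (simp add: leL_mult_right)
  define u where "u = inv t \<otimes> j"
  have tu: "t \<otimes> u = j" and u: "u \<in> M"
    using j t by (simp_all add: u_def leL_def)
  have "\<Delta> \<preceq> t \<otimes> \<Delta>"
    using conj_Delta_in_M(2)[OF t(3)] t by (simp add: leL_def m_assoc)
  then have "t \<otimes> u \<preceq> t \<otimes> \<Delta>"
    using leL_trans[OF _ _ _ j_Delta] j t tu by simp
  then have "u \<in> Div G M \<Delta>"
    using u t by (simp add: Div_iff leL_mult_left_iff)
  moreover have "u \<preceq> lprod G ts"
    using j_lprod tu t u ts leL_mult_left_iff[of t u "lprod G ts"] by simp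
  ultimately have "u \<in> N"
    using Cons.IH Cons.prems(1) by simp
  then have "j \<in> Div G M \<delta>"
    using tu t u j_Delta Div_delta Div_delta_subset_N N_mult by (auto simp: Div_iff)
  then have "s \<in> Div G M \<delta>"
    using leL_trans[OF _ j(1) _ j(2)] s by (simp add: Div_iff)
  then show ?case
    by (rule Div_delta_subset_N)
qed

lemma Div_Delta_leL_N_in_Div_delta:
  assumes "s \<in> Div G M \<Delta>" "b \<in> N" "s \<preceq> b"
  shows "s \<in> Div G M \<delta>"
proof -
  obtain ts where "set ts \<subseteq> Div G M \<delta>" "b = lprod G ts"
    using assms(2) unfolding N_generated monoid_gen_def by auto
  with assms show ?thesis
    using Div_Delta_leL_lprod_in_N Div_delta by blast
qed

lemma Div_Delta_common_lower_bound_eq_one: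
  assumes "x \<in> Div G M \<Delta>" "b \<in> N" "x \<preceq> b" "x \<preceq> \<omega>"
  shows "x = \<one>"
proof -
  have x: "x \<in> Div G M \<delta>" "x \<in> M"
    using Div_Delta_leL_N_in_Div_delta assms(1-3) by (auto simp: Div_iff)
  have "\<delta> \<otimes> x \<preceq> \<Delta>"
    using assms(4) x leL_mult_left_iff[of \<delta> x \<omega>] by simp
  then have "\<delta> \<otimes> x \<in> Div G M \<Delta> \<inter> N"
    using x delta_in_M delta_in_N Div_delta_subset_N N_mult by (auto simp: Div_iff)
  then have "\<delta> \<otimes> x \<in> Div G M \<delta>"
    using Div_delta by simp
  then have "\<delta> \<otimes> x \<preceq> \<delta> \<otimes> \<one>"
    by (simp add: Div_iff)
  then have "x \<preceq> \<one>"
    using x leL_mult_left_iff[of \<delta> x \<one>] by simp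
  then have "inv x \<in> M"
    using x by (simp add: leL_def)
  with x show ?thesis
    using M_inv_eq_one by blast
qed

lemma lprod_common_lower_bound_eq_one:
  assumes "set xs \<subseteq> Div G M \<Delta>" "b \<in> N" "lprod G xs \<preceq> b" "lprod G xs \<preceq> \<omega>"
  shows "lprod G xs = \<one>"
  using assms(1,3,4)
proof (induction xs)
  case (Cons x xs)
  have x: "x \<in> Div G M \<Delta>" "x \<in> M" and xs: "lprod G xs \<in> M"
    using Cons.prems(1) by (auto simp: Div_iff lprod_Div_in_M)
  have b: "b \<in> carrier G"
    using N_subset_M assms(2) by simp
  have x_le: "x \<preceq> lprod G (x # xs)"
    using x xs by (simp add: leL_mult_right)
  have closed: "x \<in> carrier G" "lprod G (x # xs) \<in> carrier G" "\<omega> \<in> carrier G"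
    using x xs by simp_all
  have "x \<preceq> b" "x \<preceq> \<omega>"
    using leL_trans[OF closed(1,2) b x_le Cons.prems(2)]
      leL_trans[OF closed x_le Cons.prems(3)] by simp_all
  then have "x = \<one>"
    using Div_Delta_common_lower_bound_eq_one x(1) assms(2) by blast
  with Cons xs show ?case
    by simp
qed simp

lemma meet_omega:
  assumes b: "b \<in> N" shows "is_meetL G M b \<omega> \<one>"
proof -
  have b_M: "b \<in> M"
    using b by (rule N_subset_M)
  then obtain m where m: "is_meetL G M b \<omega> m"
    using meetL_exists[of b \<omega>] omega_in_M by auto
  then have "\<one> \<preceq> m"
    using b_M omega_in_M by (simp add: is_meetL_def one_leL_iff)
  then have "m \<in> M" "m \<preceq> b" "m \<preceq> \<omega>"
    using m by (simp_all add: is_meetL_def one_leL_iff)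
  moreover obtain xs where "set xs \<subseteq> Div G M \<Delta>" "m = lprod G xs"
    using \<open>m \<in> M\<close> Div_Delta_generates unfolding monoid_gen_def by auto
  ultimately have "m = \<one>"
    using lprod_common_lower_bound_eq_one b by blast
  with m show ?thesis
    by simp
qed

lemma Delta_leL_common_upper_bound:
  assumes p: "p \<in> Div G M \<delta>" and z: "z \<in> carrier G" "\<delta> \<preceq> z" "inv p \<otimes> \<Delta> \<preceq> z"
  shows "\<Delta> \<preceq> z"
proof -
  have p_M: "p \<in> M" "\<delta> \<otimes> inv p \<in> M"
    using p Div_iff_right[OF balanced_delta] by auto
  obtain J where J: "J \<in> carrier G" "\<delta> \<preceq> J" "inv p \<otimes> \<Delta> \<preceq> J"
    and J_least: "\<And>z. z \<in> carrier G \<Longrightarrow> \<delta> \<preceq> z \<Longrightarrow> inv p \<otimes> \<Delta> \<preceq> z \<Longrightarrow> J \<preceq> z"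
    using joinL_exists[of \<delta> "inv p \<otimes> \<Delta>"] p_M by auto
  have "inv p \<otimes> \<Delta> \<preceq> \<Delta>"
    using conj_Delta_in_M(2)[OF p_M(1)] p_M by (simp add: leL_def inv_mult_group m_assoc)
  then have "J \<preceq> \<Delta>"
    using J_least delta_leL_Delta by simp
  moreover have "J \<in> M"
    using leL_trans[of \<one> \<delta> J] J delta_in_M by (simp add: one_leL_iff)
  ultimately have "J \<in> Div G M \<Delta>"
    by (simp add: Div_iff)
  (* The join J of \<delta> and p^{-1}\<Delta> is \<Delta>: write J = r^{-1}\<Delta>; then r is a simple of \<delta>
     with r\<delta> still dividing \<Delta>, so r\<delta> is a simple of \<delta>, which forces r = 1. *)
  define r where "r = \<Delta> \<otimes> inv J"
  have r: "r \<in> M" and J_eq: "J = inv r \<otimes> \<Delta>"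
    using \<open>J \<in> Div G M \<Delta>\<close> J Div_iff_right[OF balanced_Delta] by (auto simp: r_def inv_mult_group m_assoc)
  have "inv \<Delta> \<otimes> (p \<otimes> inv r) \<otimes> \<Delta> \<in> M"
    using J(3) J_eq r p_M by (simp add: leL_def inv_mult_group m_assoc)
  then have "\<Delta> \<otimes> (inv \<Delta> \<otimes> (p \<otimes> inv r) \<otimes> \<Delta>) \<otimes> inv \<Delta> \<in> M"
    by (rule conj_Delta_in_M(1))
  then have "p \<otimes> inv r \<in> M"
    using p_M r by (simp add: m_assoc)
  moreover have "\<delta> \<otimes> inv r = (\<delta> \<otimes> inv p) \<otimes> (p \<otimes> inv r)"
    using p_M r by (simp add: m_assoc)
  ultimately have "r \<in> Div G M \<delta>"
    using r p_M Div_iff_right[OF balanced_delta] by auto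
  moreover have "inv (r \<otimes> \<delta>) \<otimes> \<Delta> \<in> M"
    using J(2) J_eq r by (simp add: leL_def inv_mult_group m_assoc)
  ultimately have "r \<otimes> \<delta> \<in> Div G M \<Delta> \<inter> N"
    using r delta_in_M delta_in_N Div_delta_subset_N N_mult by (auto simp: Div_iff leL_def)
  then have "\<delta> \<otimes> inv (r \<otimes> \<delta>) \<in> M"
    using Div_delta Div_iff_right[OF balanced_delta] by blast
  then have "inv r \<in> M"
    using r by (simp add: inv_mult_group m_assoc)
  then have "r = \<one>"
    using r M_inv_eq_one by blast
  then have "J = \<Delta>"
    using J_eq by simp
  with J_least z show ?thesis
    by blast
qed

lemma omega_leL_cancel_Div_delta:
  assumes t: "t \<in> Div G M \<delta>" and y: "y \<in> M" and le: "\<omega> \<preceq> t \<otimes> y"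
  shows "\<omega> \<preceq> y"
proof -
  define p where "p = \<delta> \<otimes> t \<otimes> inv \<delta>"
  have p: "p \<in> Div G M \<delta>" "p \<in> carrier G"
    using balanced_conj_Div(1)[OF balanced_delta t] by (auto simp: p_def Div_iff)
  have t_closed: "t \<in> carrier G"
    using t by (simp add: Div_iff)
  have "\<Delta> \<preceq> \<delta> \<otimes> (t \<otimes> y)"
    using le t_closed y leL_mult_left_iff[of \<delta> \<omega> "t \<otimes> y"] by simp
  moreover have "\<delta> \<otimes> (t \<otimes> y) = p \<otimes> (\<delta> \<otimes> y)"
    using t_closed y by (simp add: p_def m_assoc)
  ultimately have "inv p \<otimes> \<Delta> \<preceq> \<delta> \<otimes> y"
    using p y leL_mult_left_iff[of p "inv p \<otimes> \<Delta>" "\<delta> \<otimes> y"] by simp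
  then have "\<Delta> \<preceq> \<delta> \<otimes> y"
    using Delta_leL_common_upper_bound p y leL_mult_right by simp
  then show ?thesis
    using y leL_mult_left_iff[of \<delta> \<omega> y] by simp
qed

lemma omega_leL_cancel_lprod:
  assumes "set ts \<subseteq> Div G M \<delta>" "y \<in> M" "\<omega> \<preceq> lprod G ts \<otimes> y"
  shows "\<omega> \<preceq> y"
  using assms(1,3)
proof (induction ts)
  case (Cons t ts)
  have t: "t \<in> Div G M \<delta>" "t \<in> carrier G" and ts: "lprod G ts \<in> M"
    using Cons.prems(1) by (auto intro: lprod_Div_in_M simp: Div_iff)
  have "\<omega> \<preceq> t \<otimes> (lprod G ts \<otimes> y)"
    using Cons.prems(2) t ts assms(2) by (simp add: m_assoc)
  then have "\<omega> \<preceq> lprod G ts \<otimes> y"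
    using omega_leL_cancel_Div_delta[OF t(1)] ts assms(2) by blast
  then show ?case
    using Cons.IH Cons.prems(1) by simp
qed (use assms(2) in simp)

lemma omega_leL_cancel_N:
  assumes "b \<in> N" "y \<in> M" "\<omega> \<preceq> b \<otimes> y"
  shows "\<omega> \<preceq> y"
proof -
  obtain ts where "set ts \<subseteq> Div G M \<delta>" "b = lprod G ts"
    using assms(1) unfolding N_generated monoid_gen_def by auto
  with assms(2,3) show ?thesis
    using omega_leL_cancel_lprod by blast
qed

lemma join_omega:
  assumes b: "b \<in> N" shows "is_joinL G M b \<omega> (b \<otimes> \<omega>)"
proof -
  have b_M: "b \<in> M"
    using b by (rule N_subset_M)
  have "inv \<Delta> \<otimes> (\<delta> \<otimes> b \<otimes> inv \<delta>) \<otimes> \<Delta> \<in> M"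
    using conj_Delta_in_M(2) N_subset_M conj_delta_in_N b by blast
  then have "\<omega> \<preceq> b \<otimes> \<omega>"
    using b_M omega_commute leL_mult_right by simp
  moreover have "b \<otimes> \<omega> \<preceq> z" if "z \<in> carrier G" "b \<preceq> z" "\<omega> \<preceq> z" for z
  proof -
    have "inv b \<otimes> z \<in> M" "\<omega> \<preceq> b \<otimes> (inv b \<otimes> z)"
      using that b_M by (simp_all add: leL_def)
    then have "\<omega> \<preceq> inv b \<otimes> z"
      using omega_leL_cancel_N b by blast
    with that b_M show ?thesis
      using leL_mult_left_iff[of b \<omega> "inv b \<otimes> z"] by simp
  qed
  ultimately show ?thesis
    using b_M omega_in_M by (simp add: is_joinL_def leL_mult_right)
qed

lemma meet_join_omega:
  assumes "b \<in> N"
  shows "meetL G M b \<omega> = \<one> \<and> joinL G M b \<omega> = b \<otimes> \<omega> \<and>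
    b \<otimes> \<omega> = \<omega> \<otimes> (inv \<Delta> \<otimes> (\<delta> \<otimes> b \<otimes> inv \<delta>) \<otimes> \<Delta>)"
proof -
  have "b \<in> carrier G"
    using assms N_subset_M by simp
  with assms show ?thesis
    using meetL_eq[OF meet_omega] joinL_eq[OF join_omega] omega_commute by blast
qed

end

theorem lemma3p5:
  fixes G :: "('a, 'b) monoid_scheme" and M H N :: "'a set" and \<Delta> \<delta> b :: 'a
  assumes "garside_structure G M \<Delta>"
    and "parabolic_substructure G M \<Delta> H N \<delta>"
    and "b \<in> N"
  shows "let \<omega> = inv\<^bsub>G\<^esub> \<delta> \<otimes>\<^bsub>G\<^esub> \<Delta>;
             \<Phi>inv = (\<lambda>\<gamma>. inv\<^bsub>G\<^esub> \<Delta> \<otimes>\<^bsub>G\<^esub> \<gamma> \<otimes>\<^bsub>G\<^esub> \<Delta>);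
             \<phi> = (\<lambda>\<beta>. \<delta> \<otimes>\<^bsub>G\<^esub> \<beta> \<otimes>\<^bsub>G\<^esub> inv\<^bsub>G\<^esub> \<delta>);
             b' = \<Phi>inv (\<phi> b)
         in meetL G M b \<omega> = \<one>\<^bsub>G\<^esub> \<and>
            joinL G M b \<omega> = b \<otimes>\<^bsub>G\<^esub> \<omega> \<and>
            b \<otimes>\<^bsub>G\<^esub> \<omega> = \<omega> \<otimes>\<^bsub>G\<^esub> b'"
proof -
  have "parabolic G M \<Delta> \<delta> N"
    using assms(1,2)
    unfolding parabolic_def parabolic_axioms_def garside_def garside_axioms_def
      positive_monoid_def positive_monoid_axioms_def
      garside_structure_def parabolic_substructure_def
    by blast
  then interpret parabolic G M \<Delta> \<delta> N .
  show ?thesis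
    using meet_join_omega[OF assms(3)] unfolding Let_def .
qed

end
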